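(* Let $T$ be a tree and $H$ a graph. Let $V\subseteq V(T(H))$ and let $V_1,V_2\subseteq V$ with $V_1\cup V_2=V$ and $V_1\cap V_2=\emptyset$ (one of them possibly empty). Suppose there are two vertices $u,v$ of $T$ and vertices $1,\dots,t$ of $H$ such that for each $i\in\{1,\dots,t\}$ the role of $u^i$ differs from the role of $v^i$. Then $T(H)$ has a matching of size $t$ such that the two ends of each of its edges have different roles.
   Context: Graph $T(H)$: for a tree $T$ and a graph $H$ with $V(H)=\{1,\dots,m\}$, $T(H)$ has vertices $v^i$ ($v\in V(T)$, $1\le i\le m$); for each $v$ the vertices $v^1,\dots,v^m$ span a copy $H^v$ of $H$ ($v^iv^j$ an edge iff $ij\in E(H)$), and $u^iv^i$ is an edge for each $i$ whenever $uv\in E(T)$. Roles with respect to $V_1,V_2$: each vertex of $T(H)$ has exactly one of three roles: belonging to $V_1$, belonging to $V_2$, or belonging to $V(T(H))\setminus V$. *)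

theory Defs
  imports Main
begin

definition simple_graph :: "'a set \<Rightarrow> 'a set set \<Rightarrow> bool" where
  "simple_graph VV EE \<longleftrightarrow> finite VV \<and> (\<forall>e\<in>EE. e \<subseteq> VV \<and> card e = 2)"

definition is_walk :: "'a set \<Rightarrow> 'a set set \<Rightarrow> 'a list \<Rightarrow> bool" where
  "is_walk VV EE xs \<longleftrightarrow> xs \<noteq> [] \<and> set xs \<subseteq> VV \<and>
     (\<forall>k. Suc k < length xs \<longrightarrow> {xs ! k, xs ! Suc k} \<in> EE)"

definition is_path :: "'a set \<Rightarrow> 'a set set \<Rightarrow> 'a list \<Rightarrow> bool" where
  "is_path VV EE xs \<longleftrightarrow> is_walk VV EE xs \<and> distinct xs"

definition connected_graph :: "'a set \<Rightarrow> 'a set set \<Rightarrow> bool" where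
  "connected_graph VV EE \<longleftrightarrow>
     (\<forall>x\<in>VV. \<forall>y\<in>VV. \<exists>xs. is_path VV EE xs \<and> hd xs = x \<and> last xs = y)"

definition is_cycle :: "'a set \<Rightarrow> 'a set set \<Rightarrow> 'a list \<Rightarrow> bool" where
  "is_cycle VV EE xs \<longleftrightarrow> is_path VV EE xs \<and> length xs \<ge> 3 \<and> {last xs, hd xs} \<in> EE"

definition is_tree :: "'a set \<Rightarrow> 'a set set \<Rightarrow> bool" where
  "is_tree VV EE \<longleftrightarrow> simple_graph VV EE \<and> VV \<noteq> {} \<and> connected_graph VV EE \<and>
     \<not> (\<exists>xs. is_cycle VV EE xs)"

text \<open>The graph T(H): vertex (v,i) stands for v^i; H has vertex set {1..m}.\<close>
definition TH_verts :: "'a set \<Rightarrow> nat \<Rightarrow> ('a \<times> nat) set" where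
  "TH_verts VT m = VT \<times> {1..m}"

definition TH_edges :: "'a set \<Rightarrow> 'a set set \<Rightarrow> nat \<Rightarrow> nat set set \<Rightarrow> ('a \<times> nat) set set" where
  "TH_edges VT ET m EH =
     {{(v, i), (v, j)} | v i j. v \<in> VT \<and> {i, j} \<in> EH} \<union>
     {{(u, i), (v, i)} | u v i. {u, v} \<in> ET \<and> i \<in> {1..m}}"

datatype role = In_V1 | In_V2 | Outside_V

definition role_of :: "'b set \<Rightarrow> 'b set \<Rightarrow> 'b \<Rightarrow> role" where
  "role_of V1 V2 x = (if x \<in> V1 then In_V1 else if x \<in> V2 then In_V2 else Outside_V)"

definition is_matching :: "'b set set \<Rightarrow> 'b set set \<Rightarrow> bool" where
  "is_matching EE M \<longleftrightarrow> M \<subseteq> EE \<and> (\<forall>e\<in>M. \<forall>f\<in>M. e \<noteq> f \<longrightarrow> e \<inter> f = {})"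

end

theory Submission
  imports Defs
begin

text \<open>For each i \<le> t the role of w^i changes somewhere along a path of T from u to v, i.e. across
  some edge ab of T; the edge a^i b^i of the i-th copy of T then joins vertices of different roles.
  Edges taken in distinct copies of T are disjoint, so these t edges form a matching.\<close>

lemma list_consecutive_change:
  assumes "xs \<noteq> []" and "f (hd xs) \<noteq> f (last xs)"
  shows "\<exists>k. Suc k < length xs \<and> f (xs ! k) \<noteq> f (xs ! Suc k)"
  using assms
proof (induction xs)
  case Nil
  then show ?case by simp
next
  case (Cons a xs)
  show ?case
  proof (cases "xs = [] \<or> f a \<noteq> f (hd xs)")
    case True
    with Cons.prems have "xs \<noteq> []" "f a \<noteq> f (hd xs)" by auto
    then show ?thesis by (intro exI[of _ 0]) (simp add: hd_conv_nth)
  next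
    case False
    with Cons.prems have "xs \<noteq> []" "f (hd xs) \<noteq> f (last xs)" by auto
    then obtain k where "Suc k < length xs" "f (xs ! k) \<noteq> f (xs ! Suc k)"
      using Cons.IH by blast
    then show ?thesis by (intro exI[of _ "Suc k"]) simp
  qed
qed

lemma connected_graph_separating_edge:
  assumes "connected_graph VV EE" and "x \<in> VV" and "y \<in> VV" and "f x \<noteq> f y"
  shows "\<exists>a b. {a, b} \<in> EE \<and> f a \<noteq> f b"
proof -
  obtain xs where "is_path VV EE xs" "hd xs = x" "last xs = y"
    using assms(1-3) unfolding connected_graph_def by blast
  then have "xs \<noteq> []" and edges: "\<And>k. Suc k < length xs \<Longrightarrow> {xs ! k, xs ! Suc k} \<in> EE"
    and "f (hd xs) \<noteq> f (last xs)"
    using assms(4) unfolding is_path_def is_walk_def by auto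
  then obtain k where "Suc k < length xs" "f (xs ! k) \<noteq> f (xs ! Suc k)"
    using list_consecutive_change by metis
  with edges show ?thesis by blast
qed

lemma TH_edges_layer:
  assumes "{a, b} \<in> ET" and "i \<in> {1..m}"
  shows "{(a, i), (b, i)} \<in> TH_edges VT ET m EH"
  using assms unfolding TH_edges_def by blast

lemma is_matching_layered:
  assumes "\<And>i. i \<in> I \<Longrightarrow> g i \<in> EE \<and> snd ` g i = {i}"
  shows "is_matching EE (g ` I)" and "inj_on g I"
proof -
  have disjoint: "g i \<inter> g j = {}" if "i \<in> I" "j \<in> I" "i \<noteq> j" for i j
  proof (rule equals0I)
    fix z assume "z \<in> g i \<inter> g j"
    then have "snd z \<in> snd ` g i" "snd z \<in> snd ` g j" by auto
    with assms[OF that(1)] assms[OF that(2)] that(3) show False by simp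
  qed
  show "inj_on g I"
    by (rule inj_onI) (metis assms singleton_inject)
  show "is_matching EE (g ` I)"
    unfolding is_matching_def using assms disjoint by blast
qed

lemma TH_edges_layer_matching:
  assumes "finite I" and "I \<subseteq> {1..m}" and "\<forall>i\<in>I. \<exists>a b. {a, b} \<in> ET \<and> P i a b"
  shows "\<exists>M. is_matching (TH_edges VT ET m EH) M \<and> finite M \<and> card M = card I \<and>
           (\<forall>e\<in>M. \<exists>i a b. e = {(a, i), (b, i)} \<and> P i a b)"
proof -
  from assms(3) have "\<forall>i\<in>I. \<exists>ab. {fst ab, snd ab} \<in> ET \<and> P i (fst ab) (snd ab)"
    by force
  then obtain ab where ab: "\<forall>i\<in>I. {fst (ab i), snd (ab i)} \<in> ET \<and> P i (fst (ab i)) (snd (ab i))"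
    by (rule bchoice[THEN exE])
  define g where "g i = {(fst (ab i), i), (snd (ab i), i)}" for i
  have layer: "g i \<in> TH_edges VT ET m EH \<and> snd ` g i = {i}" if "i \<in> I" for i
  proof -
    have "{fst (ab i), snd (ab i)} \<in> ET" "i \<in> {1..m}" using ab assms(2) that by auto
    then show ?thesis unfolding g_def by (simp add: TH_edges_layer)
  qed
  have "is_matching (TH_edges VT ET m EH) (g ` I)" "card (g ` I) = card I"
    using is_matching_layered[of I, OF layer] by (simp_all add: card_image)
  moreover have "\<forall>e\<in>g ` I. \<exists>i a b. e = {(a, i), (b, i)} \<and> P i a b"
    using ab unfolding g_def by blast
  ultimately show ?thesis using assms(1) by blast
qed

theorem lemma1:
  fixes VT :: "'a set" and ET :: "'a set set" and m :: nat and EH :: "nat set set"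
    and V V1 V2 :: "('a \<times> nat) set" and u v :: 'a and t :: nat
  assumes "is_tree VT ET"
    and "simple_graph {1..m} EH"
    and "V \<subseteq> TH_verts VT m"
    and "V1 \<subseteq> V" and "V2 \<subseteq> V" and "V1 \<union> V2 = V" and "V1 \<inter> V2 = {}"
    and "u \<in> VT" and "v \<in> VT"
    and "t \<le> m"
    and "\<forall>i\<in>{1..t}. role_of V1 V2 (u, i) \<noteq> role_of V1 V2 (v, i)"
  shows "\<exists>M. is_matching (TH_edges VT ET m EH) M \<and> finite M \<and> card M = t \<and>
           (\<forall>e\<in>M. \<exists>x y. e = {x, y} \<and> role_of V1 V2 x \<noteq> role_of V1 V2 y)"
proof -
  let ?r = "role_of V1 V2"
  have connected: "connected_graph VT ET" using assms(1) unfolding is_tree_def by blast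
  have "\<forall>i\<in>{1..t}. \<exists>a b. {a, b} \<in> ET \<and> ?r (a, i) \<noteq> ?r (b, i)"
  proof
    fix i assume "i \<in> {1..t}"
    with assms(11) have "?r (u, i) \<noteq> ?r (v, i)" by blast
    then show "\<exists>a b. {a, b} \<in> ET \<and> ?r (a, i) \<noteq> ?r (b, i)"
      using connected_graph_separating_edge[OF connected assms(8,9), of "\<lambda>w. ?r (w, i)"] by blast
  qed
  from TH_edges_layer_matching[of "{1..t}" m ET "\<lambda>i a b. ?r (a, i) \<noteq> ?r (b, i)", OF _ _ this]
  show ?thesis using assms(10) by fastforce
qed

end
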